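(* Let $G$ be a triangle-free graph with at least five vertices and minimum degree at least $3$. Define $G'$ with vertex set $V(G)\times\{0,1,2,3\}$ whose edges are: $(v,i)(v,j)$ for every $v\in V(G)$ and distinct $i,j\in\{0,1,2,3\}$; $(u,0)(v,0)$ for all distinct $u,v\in V(G)$; and $(u,i)(v,i)$ for $i\in\{1,2,3\}$ whenever $uv\in E(G)$; there are no other edges. Let $C=V(G)\times\{0\}$ (a clique of $G'$). Let $G''$ be obtained from $G'$ by adding, for each $w\in V(G')\setminus C$, a new vertex $w'$ adjacent only to $w$. Then $G'$ and $G''$ are diamond-free, and the following are equivalent: (1) $G$ is not $3$-colorable; (2) $C$ is a strong clique in $G'$; (3) $G'$ has a strong clique; (4) $C$ is a strong clique in $G''$; (5) every vertex of $G''$ is contained in a strong clique; (6) every clique in the collection $\{C\}\cup\{\{w,w'\}: w\in V(G')\setminus C\}$ is strong in $G''$; (7) $V(G'')$ can be partitioned into strong cliques.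
   Context: A clique is strong if it intersects every inclusion-maximal stable set. The diamond is $K_4$ minus one edge; diamond-free means no induced subgraph isomorphic to the diamond. A graph is $3$-colorable if its vertex set can be partitioned into three stable sets. *)

theory Defs
  imports Main
begin

(* A graph is given by a vertex set V and a symmetric irreflexive adjacency relation E;
   only adjacencies between vertices of V are relevant. *)

definition is_clique :: "'a set \<Rightarrow> ('a \<Rightarrow> 'a \<Rightarrow> bool) \<Rightarrow> 'a set \<Rightarrow> bool" where
  "is_clique V E K \<longleftrightarrow> K \<subseteq> V \<and> (\<forall>x\<in>K. \<forall>y\<in>K. x \<noteq> y \<longrightarrow> E x y)"

definition is_stable :: "'a set \<Rightarrow> ('a \<Rightarrow> 'a \<Rightarrow> bool) \<Rightarrow> 'a set \<Rightarrow> bool" where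
  "is_stable V E S \<longleftrightarrow> S \<subseteq> V \<and> (\<forall>x\<in>S. \<forall>y\<in>S. x \<noteq> y \<longrightarrow> \<not> E x y)"

definition maximal_stable :: "'a set \<Rightarrow> ('a \<Rightarrow> 'a \<Rightarrow> bool) \<Rightarrow> 'a set \<Rightarrow> bool" where
  "maximal_stable V E S \<longleftrightarrow> is_stable V E S \<and> (\<forall>T. is_stable V E T \<and> S \<subseteq> T \<longrightarrow> T = S)"

definition strong_clique :: "'a set \<Rightarrow> ('a \<Rightarrow> 'a \<Rightarrow> bool) \<Rightarrow> 'a set \<Rightarrow> bool" where
  "strong_clique V E K \<longleftrightarrow> is_clique V E K \<and> (\<forall>S. maximal_stable V E S \<longrightarrow> K \<inter> S \<noteq> {})"

definition triangle_free :: "'a set \<Rightarrow> ('a \<Rightarrow> 'a \<Rightarrow> bool) \<Rightarrow> bool" where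
  "triangle_free V E \<longleftrightarrow> \<not> (\<exists>a\<in>V. \<exists>b\<in>V. \<exists>c\<in>V. E a b \<and> E b c \<and> E a c)"

definition min_degree_ge :: "'a set \<Rightarrow> ('a \<Rightarrow> 'a \<Rightarrow> bool) \<Rightarrow> nat \<Rightarrow> bool" where
  "min_degree_ge V E k \<longleftrightarrow> (\<forall>v\<in>V. card {u\<in>V. E v u} \<ge> k)"

definition diamond_free :: "'a set \<Rightarrow> ('a \<Rightarrow> 'a \<Rightarrow> bool) \<Rightarrow> bool" where
  "diamond_free V E \<longleftrightarrow> \<not> (\<exists>a\<in>V. \<exists>b\<in>V. \<exists>c\<in>V. \<exists>d\<in>V.
      distinct [a, b, c, d] \<and> E a b \<and> E a c \<and> E a d \<and> E b c \<and> E b d \<and> \<not> E c d)"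

definition three_colorable :: "'a set \<Rightarrow> ('a \<Rightarrow> 'a \<Rightarrow> bool) \<Rightarrow> bool" where
  "three_colorable V E \<longleftrightarrow> (\<exists>A B C. is_stable V E A \<and> is_stable V E B \<and> is_stable V E C \<and>
      A \<union> B \<union> C = V \<and> A \<inter> B = {} \<and> A \<inter> C = {} \<and> B \<inter> C = {})"

definition partition_into_strong_cliques :: "'a set \<Rightarrow> ('a \<Rightarrow> 'a \<Rightarrow> bool) \<Rightarrow> bool" where
  "partition_into_strong_cliques V E \<longleftrightarrow> (\<exists>P. \<Union>P = V \<and> (\<forall>K\<in>P. K \<noteq> {} \<and> strong_clique V E K) \<and>
      (\<forall>K1\<in>P. \<forall>K2\<in>P. K1 \<noteq> K2 \<longrightarrow> K1 \<inter> K2 = {}))"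

definition Gp_V :: "'a set \<Rightarrow> ('a \<times> nat) set" where
  "Gp_V V = V \<times> {0, 1, 2, 3}"

definition Gp_E :: "('a \<Rightarrow> 'a \<Rightarrow> bool) \<Rightarrow> ('a \<times> nat) \<Rightarrow> ('a \<times> nat) \<Rightarrow> bool" where
  "Gp_E E x y \<longleftrightarrow>
     (fst x = fst y \<and> snd x \<noteq> snd y) \<or>
     (snd x = 0 \<and> snd y = 0 \<and> fst x \<noteq> fst y) \<or>
     (snd x = snd y \<and> snd x \<in> {1, 2, 3} \<and> E (fst x) (fst y))"

definition Gp_C :: "'a set \<Rightarrow> ('a \<times> nat) set" where
  "Gp_C V = V \<times> {0}"

(* The graph G'': vertex (w, False) is w itself, (w, True) is the new pendant vertex w' *)
definition Gpp_V :: "'a set \<Rightarrow> (('a \<times> nat) \<times> bool) set" where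
  "Gpp_V V = Gp_V V \<times> {False} \<union> (Gp_V V - Gp_C V) \<times> {True}"

definition Gpp_E :: "'a set \<Rightarrow> ('a \<Rightarrow> 'a \<Rightarrow> bool) \<Rightarrow> (('a \<times> nat) \<times> bool) \<Rightarrow> (('a \<times> nat) \<times> bool) \<Rightarrow> bool" where
  "Gpp_E V E x y \<longleftrightarrow>
     (\<not> snd x \<and> \<not> snd y \<and> Gp_E E (fst x) (fst y)) \<or>
     (fst x = fst y \<and> snd x \<noteq> snd y \<and> fst x \<notin> Gp_C V)"

end

theory Submission
  imports Defs
begin

text \<open>
  Since G is triangle-free, every triangle of G' lies in a column \<open>{v} \<times> {0..3}\<close> or in C; two
  triangles sharing an edge therefore lie in the same one of these cliques, so G' has no diamond,
  and neither has G'', whose new vertices have degree one.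

  The colour classes of a 3-colouring, put into the layers 1, 2, 3, form a stable set of G' that
  meets every column. Conversely, a maximal stable set avoiding C must contain, for every v, a
  neighbour of (v, 0) outside C, i.e. a vertex (v, i) with i > 0; reading off i gives a
  3-colouring.

  If G is 3-colourable, no clique of G' is strong: a clique lies in C, in a column, or is an edge
  \<open>{(u, i), (v, i)}\<close> with i > 0, and in each case some stable set dominates it (the colouring;
  three neighbours of v in the three layers together with a fifth vertex in layer 0; the
  vertices (u, j), j \<notin> {0, i}, and (v, 0)). A maximal stable set containing it misses the clique.
  In G'' the pendant edges are always strong, and a clique through C lies in G', which gives the
  remaining equivalences.
\<close>

lemma maximal_stable_extends:
  assumes "finite V" "is_stable V E T"
  obtains S where "maximal_stable V E S" "T \<subseteq> S"
proof -
  have "finite {S. is_stable V E S}"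
    by (rule finite_subset[of _ "Pow V"]) (auto simp: is_stable_def assms(1))
  then obtain S where "S \<in> {S. is_stable V E S}" "T \<subseteq> S"
    and "\<forall>S'\<in>{S. is_stable V E S}. S \<subseteq> S' \<longrightarrow> S' = S"
    using finite_has_maximal2[of "{S. is_stable V E S}" T] assms(2) by auto
  then show thesis using that unfolding maximal_stable_def by blast
qed

lemma maximal_stable_dominates:
  assumes "maximal_stable V E S" "x \<in> V - S"
  shows "\<exists>y\<in>S. E x y \<or> E y x"
proof (rule ccontr)
  assume "\<not> (\<exists>y\<in>S. E x y \<or> E y x)"
  then have "is_stable V E (insert x S)" using assms unfolding maximal_stable_def is_stable_def by blast
  then show False using assms unfolding maximal_stable_def by blast
qed

lemma not_strong_clique_if_dominated:
  assumes "finite V" "\<And>x. \<not> E x x" "is_stable V E T" "\<forall>k\<in>K. \<exists>t\<in>T. E k t"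
  shows "\<not> strong_clique V E K"
proof
  assume "strong_clique V E K"
  moreover obtain S where S: "maximal_stable V E S" "T \<subseteq> S"
    using maximal_stable_extends assms(1,3) by blast
  ultimately obtain k where k: "k \<in> K" "k \<in> S" unfolding strong_clique_def by blast
  then obtain t where t: "t \<in> S" "E k t" using assms(4) S(2) by blast
  moreover have "k \<noteq> t" using t(2) assms(2) by blast
  ultimately show False using S(1) k(2) unfolding maximal_stable_def is_stable_def by blast
qed

lemma partition_into_strong_cliques_covers:
  assumes "partition_into_strong_cliques V E" "x \<in> V"
  obtains K where "strong_clique V E K" "x \<in> K"
proof -
  obtain P where "\<Union>P = V" "\<forall>K\<in>P. K \<noteq> {} \<and> strong_clique V E K"
    using assms(1) unfolding partition_into_strong_cliques_def by blast
  then show thesis using that assms(2) by blast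
qed

lemma finite_Gp_V: "finite V \<Longrightarrow> finite (Gp_V V)"
  by (simp add: Gp_V_def)

lemma Gp_E_irrefl: "(\<And>v. \<not> E v v) \<Longrightarrow> \<not> Gp_E E x x"
  by (simp add: Gp_E_def)

lemma Gp_E_diff_fst: "u \<noteq> v \<Longrightarrow> Gp_E E (u, i) (v, j) \<longleftrightarrow> i = j \<and> (i = 0 \<or> i \<in> {1, 2, 3} \<and> E u v)"
  by (auto simp: Gp_E_def)

lemma Gp_triangle_in_column_or_C:
  assumes "triangle_free V E" "(x, i) \<in> Gp_V V" "(y, j) \<in> Gp_V V" "(z, k) \<in> Gp_V V"
    and "distinct [(x, i), (y, j), (z, k)]"
    and xy: "Gp_E E (x, i) (y, j)" and xz: "Gp_E E (x, i) (z, k)" and yz: "Gp_E E (y, j) (z, k)"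
  shows "x = y \<and> y = z \<or> i = 0 \<and> j = 0 \<and> k = 0"
proof (cases "x = y")
  case True
  then show ?thesis using assms(5) xz yz Gp_E_diff_fst[of x z] by fastforce
next
  case False
  then have ij: "i = j" "i = 0 \<or> E x y" using xy Gp_E_diff_fst[OF False] by auto
  have "z \<noteq> x" "z \<noteq> y" using assms(5) xz yz ij(1) Gp_E_diff_fst[of y x] Gp_E_diff_fst[of x y] False
    by fastforce+
  then have "i = k" "i = 0 \<or> E x z \<and> E y z" using xz yz ij(1) Gp_E_diff_fst[of x z] Gp_E_diff_fst[of y z] by auto
  then show ?thesis using ij assms(1-4) unfolding triangle_free_def Gp_V_def by blast
qed

lemma diamond_free_Gp:
  assumes "triangle_free V E"
  shows "diamond_free (Gp_V V) (Gp_E E)"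
  unfolding diamond_free_def
proof (intro notI, elim bexE conjE)
  fix a b c d
  assume V: "a \<in> Gp_V V" "b \<in> Gp_V V" "c \<in> Gp_V V" "d \<in> Gp_V V" and dist: "distinct [a, b, c, d]"
    and "Gp_E E a b" "Gp_E E a c" "Gp_E E a d" "Gp_E E b c" "Gp_E E b d" and cd: "\<not> Gp_E E c d"
  moreover obtain a1 a2 b1 b2 c1 c2 d1 d2
    where abcd: "a = (a1, a2)" "b = (b1, b2)" "c = (c1, c2)" "d = (d1, d2)"
    by (metis prod.exhaust)
  ultimately have "a1 = b1 \<and> b1 = c1 \<or> a2 = 0 \<and> b2 = 0 \<and> c2 = 0"
    and "a1 = b1 \<and> b1 = d1 \<or> a2 = 0 \<and> b2 = 0 \<and> d2 = 0"
    using Gp_triangle_in_column_or_C[OF assms] by simp_all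
  with dist cd abcd show False
    by (auto simp: Gp_E_def)
qed

lemma three_colorable_iff_Gp_transversal:
  "three_colorable V E \<longleftrightarrow>
    (\<exists>T. is_stable (Gp_V V) (Gp_E E) T \<and> (\<forall>v\<in>V. \<exists>i\<in>{1, 2, 3}. (v, i) \<in> T))"
proof
  assume "three_colorable V E"
  then obtain A B C where ABC: "is_stable V E A" "is_stable V E B" "is_stable V E C"
    "A \<union> B \<union> C = V" "A \<inter> B = {}" "A \<inter> C = {}" "B \<inter> C = {}"
    unfolding three_colorable_def by blast
  let ?T = "A \<times> {1} \<union> B \<times> {2} \<union> C \<times> {3 :: nat}"
  have "is_stable (Gp_V V) (Gp_E E) ?T"
    using ABC unfolding is_stable_def Gp_V_def Gp_E_def by auto
  moreover have "\<forall>v\<in>V. \<exists>i\<in>{1, 2, 3}. (v, i) \<in> ?T" using ABC(4) by auto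
  ultimately show "\<exists>T. is_stable (Gp_V V) (Gp_E E) T \<and> (\<forall>v\<in>V. \<exists>i\<in>{1, 2, 3}. (v, i) \<in> T)"
    by blast
next
  assume "\<exists>T. is_stable (Gp_V V) (Gp_E E) T \<and> (\<forall>v\<in>V. \<exists>i\<in>{1, 2, 3}. (v, i) \<in> T)"
  then obtain T where T: "is_stable (Gp_V V) (Gp_E E) T" "\<forall>v\<in>V. \<exists>i\<in>{1, 2, 3}. (v, i) \<in> T"
    by blast
  let ?A = "\<lambda>i :: nat. {v \<in> V. (v, i) \<in> T}"
  have "is_stable V E (?A 1)" "is_stable V E (?A 2)" "is_stable V E (?A 3)"
    using T(1) unfolding is_stable_def Gp_E_def by fastforce+
  moreover have "?A 1 \<inter> ?A 2 = {}" "?A 1 \<inter> ?A 3 = {}" "?A 2 \<inter> ?A 3 = {}"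
    using T(1) unfolding is_stable_def Gp_E_def by fastforce+
  moreover have "?A 1 \<union> ?A 2 \<union> ?A 3 = V" using T(2) by auto
  ultimately show "three_colorable V E" unfolding three_colorable_def by blast
qed

lemma three_colorable_if_Gp_stable_dominates_C:
  assumes "is_stable (Gp_V V) (Gp_E E) S" "S \<inter> Gp_C V = {}"
    and "\<forall>v\<in>V. \<exists>s\<in>S. Gp_E E (v, 0) s \<or> Gp_E E s (v, 0)"
  shows "three_colorable V E"
proof -
  have "\<exists>i\<in>{1, 2, 3}. (v, i) \<in> S" if v: "v \<in> V" for v
  proof -
    obtain s where s: "s \<in> S" "Gp_E E (v, 0) s \<or> Gp_E E s (v, 0)" using assms(3) v by blast
    moreover have "s \<in> Gp_V V - Gp_C V" using s(1) assms(1,2) unfolding is_stable_def by blast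
    ultimately show ?thesis by (cases s) (auto simp: Gp_E_def Gp_V_def Gp_C_def)
  qed
  then show ?thesis using assms(1) unfolding three_colorable_iff_Gp_transversal by blast
qed

lemma Gp_C_subset_Gp_V: "Gp_C V \<subseteq> Gp_V V"
  by (auto simp: Gp_C_def Gp_V_def)

lemma clique_Gp_C: "is_clique (Gp_V V) (Gp_E E) (Gp_C V)"
  unfolding is_clique_def Gp_C_def Gp_V_def Gp_E_def by auto

lemma strong_clique_Gp_C:
  assumes "\<not> three_colorable V E"
  shows "strong_clique (Gp_V V) (Gp_E E) (Gp_C V)"
  unfolding strong_clique_def
proof (intro conjI clique_Gp_C allI impI notI)
  fix S assume S: "maximal_stable (Gp_V V) (Gp_E E) S" and C: "Gp_C V \<inter> S = {}"
  have "is_stable (Gp_V V) (Gp_E E) S" using S by (simp add: maximal_stable_def)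
  moreover have "S \<inter> Gp_C V = {}" using C by blast
  moreover have "\<forall>v\<in>V. \<exists>s\<in>S. Gp_E E (v, 0) s \<or> Gp_E E s (v, 0)"
  proof
    fix v assume "v \<in> V"
    then have "(v, 0) \<in> Gp_V V - S" using C unfolding Gp_V_def Gp_C_def by auto
    then show "\<exists>s\<in>S. Gp_E E (v, 0) s \<or> Gp_E E s (v, 0)" by (rule maximal_stable_dominates[OF S])
  qed
  ultimately have "three_colorable V E" by (rule three_colorable_if_Gp_stable_dominates_C)
  with assms show False by contradiction
qed

lemma Gp_column_dominated:
  assumes "finite V" "\<And>x. \<not> E x x" "card V \<ge> 5" "min_degree_ge V E 3" "v \<in> V"
  obtains T where "is_stable (Gp_V V) (Gp_E E) T" "\<forall>k\<in>{0, 1, 2, 3}. \<exists>t\<in>T. Gp_E E (v, k) t"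
proof -
  obtain N where "N \<subseteq> {u \<in> V. E v u}" "card N = 3"
    using assms(4,5) obtain_subset_with_card_n unfolding min_degree_ge_def by meson
  then obtain a b c where abc: "a \<in> V" "b \<in> V" "c \<in> V" "E v a" "E v b" "E v c" "distinct [a, b, c]"
    by (auto simp: card_3_iff)
  have "card {v, a, b, c} < card V"
    using assms(3) card_length[of "[v, a, b, c]"] by simp
  then have "\<not> V \<subseteq> {v, a, b, c}" using card_mono[of "{v, a, b, c}" V] by auto
  then obtain w where w: "w \<in> V" "w \<notin> {v, a, b, c}" by blast
  have "a \<noteq> v" "b \<noteq> v" "c \<noteq> v" using abc assms(2) by auto
  then show thesis
    using that[of "{(a, 1), (b, 2), (c, 3), (w, 0)}"] abc w
    unfolding is_stable_def Gp_V_def Gp_E_def by auto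
qed

lemma Gp_layer_edge_dominated:
  assumes "u \<in> V" "v \<in> V" "u \<noteq> v" "i \<in> {1, 2, 3}"
  obtains T where "is_stable (Gp_V V) (Gp_E E) T" "\<forall>k\<in>{(u, i), (v, i)}. \<exists>t\<in>T. Gp_E E k t"
proof -
  define j :: nat where "j = (if i = 1 then 2 else 1)"
  have "j \<in> {1, 2, 3}" "j \<noteq> i" unfolding j_def by auto
  then show thesis
    using that[of "{(u, j), (v, 0)}"] assms unfolding is_stable_def Gp_V_def Gp_E_def by auto
qed

lemma Gp_clique_cases:
  assumes tf: "triangle_free V E" and K: "is_clique (Gp_V V) (Gp_E E) K"
  obtains "K \<subseteq> Gp_C V"
  | v where "v \<in> V" "K \<subseteq> {v} \<times> {0, 1, 2, 3}"
  | u v i where "u \<in> V" "v \<in> V" "u \<noteq> v" "i \<in> {1, 2, 3}" "K \<subseteq> {(u, i), (v, i)}"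
proof -
  have KV: "K \<subseteq> Gp_V V" and adj: "\<And>x y. x \<in> K \<Longrightarrow> y \<in> K \<Longrightarrow> x \<noteq> y \<Longrightarrow> Gp_E E x y"
    using K unfolding is_clique_def by auto
  show thesis
  proof (cases "K \<subseteq> Gp_C V")
    case True
    then show thesis by (rule that(1))
  next
    case False
    then obtain v i where vi: "(v, i) \<in> K" "(v, i) \<notin> Gp_C V" by auto
    then have v: "v \<in> V" and i: "i \<in> {1, 2, 3}" using KV unfolding Gp_V_def Gp_C_def by auto
    show thesis
    proof (cases "K \<subseteq> {v} \<times> {0, 1, 2, 3}")
      case True
      then show thesis using that(2) v by blast
    next
      case False
      then obtain u j where uj: "(u, j) \<in> K" "u \<noteq> v" using KV unfolding Gp_V_def by auto
      then have "j = i" using adj[OF vi(1) uj(1)] Gp_E_diff_fst[of v u E i j] by auto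
      have "z \<in> {(u, i), (v, i)}" if z: "z \<in> K" for z
      proof (rule ccontr)
        obtain t k where t: "z = (t, k)" by fastforce
        assume "z \<notin> {(u, i), (v, i)}"
        then have "distinct [(v, i), (u, i), (t, k)]" using uj(2) t by auto
        moreover have "(v, i) \<in> Gp_V V" "(u, i) \<in> Gp_V V" "(t, k) \<in> Gp_V V"
          using KV vi(1) uj(1) z t \<open>j = i\<close> by auto
        moreover have "Gp_E E (v, i) (u, i)" "Gp_E E (v, i) (t, k)" "Gp_E E (u, i) (t, k)"
          using adj vi(1) uj(1) z t \<open>j = i\<close> calculation(1) by auto
        ultimately have "v = u \<and> u = t \<or> i = 0"
          using Gp_triangle_in_column_or_C[OF tf] by blast
        then show False using uj(2) i by auto
      qed
      then show thesis using that(3) uj v i KV \<open>j = i\<close> unfolding Gp_V_def by blast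
    qed
  qed
qed

lemma Gp_clique_dominated:
  assumes "finite V" "\<And>x. \<not> E x x" "triangle_free V E" "card V \<ge> 5" "min_degree_ge V E 3"
    and "three_colorable V E" "is_clique (Gp_V V) (Gp_E E) K"
  obtains T where "is_stable (Gp_V V) (Gp_E E) T" "\<forall>k\<in>K. \<exists>t\<in>T. Gp_E E k t"
  using assms(3,7)
proof (cases rule: Gp_clique_cases)
  case 1
  obtain T where T: "is_stable (Gp_V V) (Gp_E E) T" "\<forall>v\<in>V. \<exists>i\<in>{1, 2, 3}. (v, i) \<in> T"
    using assms(6) unfolding three_colorable_iff_Gp_transversal by blast
  have "\<exists>t\<in>T. Gp_E E k t" if k: "k \<in> K" for k
  proof -
    obtain v where v: "v \<in> V" "k = (v, 0)" using k 1 unfolding Gp_C_def by blast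
    then obtain i where "i \<in> {1, 2, 3}" "(v, i) \<in> T" using T(2) by blast
    then show ?thesis using v(2) by (intro bexI[of _ "(v, i)"]) (auto simp: Gp_E_def)
  qed
  then show thesis using that T(1) by blast
next
  case (2 v)
  obtain T where "is_stable (Gp_V V) (Gp_E E) T" "\<forall>k\<in>{0, 1, 2, 3}. \<exists>t\<in>T. Gp_E E (v, k) t"
    using Gp_column_dominated[OF assms(1,2,4,5) 2(1)] .
  then show thesis using that 2(2) by blast
next
  case (3 u v i)
  obtain T where "is_stable (Gp_V V) (Gp_E E) T" "\<forall>k\<in>{(u, i), (v, i)}. \<exists>t\<in>T. Gp_E E k t"
    using Gp_layer_edge_dominated[OF 3(1-4)] .
  then show thesis using that 3(5) by blast
qed

lemma no_strong_clique_Gp: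
  assumes "finite V" "\<And>x. \<not> E x x" "triangle_free V E" "card V \<ge> 5" "min_degree_ge V E 3"
    and "three_colorable V E"
  shows "\<not> strong_clique (Gp_V V) (Gp_E E) K"
proof
  assume strong: "strong_clique (Gp_V V) (Gp_E E) K"
  then obtain T where "is_stable (Gp_V V) (Gp_E E) T" "\<forall>k\<in>K. \<exists>t\<in>T. Gp_E E k t"
    using Gp_clique_dominated[OF assms] unfolding strong_clique_def by blast
  from not_strong_clique_if_dominated[OF finite_Gp_V[OF assms(1)] Gp_E_irrefl[OF assms(2)] this]
  show False using strong by contradiction
qed

lemma finite_Gpp_V: "finite V \<Longrightarrow> finite (Gpp_V V)"
  by (simp add: Gpp_V_def finite_Gp_V)

lemma Gpp_E_irrefl: "(\<And>v. \<not> E v v) \<Longrightarrow> \<not> Gpp_E V E x x"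
  by (simp add: Gpp_E_def Gp_E_irrefl)

lemma Gpp_E_False_False [simp]: "Gpp_E V E (x, False) (y, False) \<longleftrightarrow> Gp_E E x y"
  by (simp add: Gpp_E_def)

lemma Gpp_E_True_right [simp]: "Gpp_E V E x (w, True) \<longleftrightarrow> x = (w, False) \<and> w \<notin> Gp_C V"
  by (cases x) (auto simp: Gpp_E_def)

lemma Gpp_E_True_left [simp]: "Gpp_E V E (w, True) y \<longleftrightarrow> y = (w, False) \<and> w \<notin> Gp_C V"
  by (cases y) (auto simp: Gpp_E_def)

lemma diamond_free_Gpp:
  assumes "triangle_free V E"
  shows "diamond_free (Gpp_V V) (Gpp_E V E)"
  unfolding diamond_free_def
proof (intro notI, elim bexE conjE)
  fix a b c d
  assume V: "a \<in> Gpp_V V" "b \<in> Gpp_V V" "c \<in> Gpp_V V" "d \<in> Gpp_V V" and dist: "distinct [a, b, c, d]"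
    and e: "Gpp_E V E a b" "Gpp_E V E a c" "Gpp_E V E a d" "Gpp_E V E b c" "Gpp_E V E b d"
    and cd: "\<not> Gpp_E V E c d"
  obtain a' b' c' d' \<alpha> \<beta> \<gamma> \<delta> where abcd: "a = (a', \<alpha>)" "b = (b', \<beta>)" "c = (c', \<gamma>)" "d = (d', \<delta>)"
    by (metis prod.exhaust)
  have pendant: "x = y" if "Gpp_E V E x (w, True) \<or> Gpp_E V E (w, True) x"
    and "Gpp_E V E y (w, True) \<or> Gpp_E V E (w, True) y" for x y w
    using that by auto
  have "\<not> \<alpha>" "\<not> \<beta>" "\<not> \<gamma>" "\<not> \<delta>"
    using pendant[of b a' c] pendant[of a b' c] pendant[of a c' b] pendant[of a d' b] dist e
    unfolding abcd by auto
  then have "a' \<in> Gp_V V" "b' \<in> Gp_V V" "c' \<in> Gp_V V" "d' \<in> Gp_V V" "distinct [a', b', c', d']"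
    and "Gp_E E a' b'" "Gp_E E a' c'" "Gp_E E a' d'" "Gp_E E b' c'" "Gp_E E b' d'" "\<not> Gp_E E c' d'"
    using V dist e cd unfolding abcd Gpp_V_def by auto
  then show False using diamond_free_Gp[OF assms] unfolding diamond_free_def by blast
qed

lemma is_stable_Gpp_False:
  "is_stable (Gp_V V) (Gp_E E) T \<Longrightarrow> is_stable (Gpp_V V) (Gpp_E V E) (T \<times> {False})"
  unfolding is_stable_def Gpp_V_def by auto

lemma strong_clique_Gpp_C:
  assumes "\<not> three_colorable V E"
  shows "strong_clique (Gpp_V V) (Gpp_E V E) (Gp_C V \<times> {False})"
  unfolding strong_clique_def
proof (intro conjI allI impI notI)
  show "is_clique (Gpp_V V) (Gpp_E V E) (Gp_C V \<times> {False})"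
    using clique_Gp_C[of V E] unfolding is_clique_def Gpp_V_def by auto
next
  fix S assume S: "maximal_stable (Gpp_V V) (Gpp_E V E) S" and C: "(Gp_C V \<times> {False}) \<inter> S = {}"
  have "is_stable (Gpp_V V) (Gpp_E V E) S" using S by (simp add: maximal_stable_def)
  then have SV: "S \<subseteq> Gpp_V V" and Sst: "\<And>x y. x \<in> S \<Longrightarrow> y \<in> S \<Longrightarrow> x \<noteq> y \<Longrightarrow> \<not> Gpp_E V E x y"
    unfolding is_stable_def by auto
  let ?R = "{w. (w, False) \<in> S}"
  have "is_stable (Gp_V V) (Gp_E E) ?R"
    unfolding is_stable_def
  proof (intro conjI ballI impI)
    show "?R \<subseteq> Gp_V V" using SV unfolding Gpp_V_def by auto
    fix x y assume "x \<in> ?R" "y \<in> ?R" "x \<noteq> y"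
    then show "\<not> Gp_E E x y" using Sst[of "(x, False)" "(y, False)"] by simp
  qed
  moreover have "?R \<inter> Gp_C V = {}" using C by blast
  moreover have "\<forall>v\<in>V. \<exists>s\<in>?R. Gp_E E (v, 0) s \<or> Gp_E E s (v, 0)"
  proof
    fix v assume v: "v \<in> V"
    then have c: "(v, 0) \<in> Gp_C V" by (simp add: Gp_C_def)
    have "((v, 0), False) \<in> Gpp_V V" using v by (simp add: Gpp_V_def Gp_V_def)
    moreover have "((v, 0), False) \<notin> S" using C c by blast
    ultimately obtain y where "y \<in> S" "Gpp_E V E ((v, 0), False) y \<or> Gpp_E V E y ((v, 0), False)"
      using maximal_stable_dominates[OF S] by blast
    moreover obtain w b where "y = (w, b)" by fastforce
    ultimately show "\<exists>s\<in>?R. Gp_E E (v, 0) s \<or> Gp_E E s (v, 0)" using c by (cases b) fastforce+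
  qed
  ultimately have "three_colorable V E" by (rule three_colorable_if_Gp_stable_dominates_C)
  with assms show False by contradiction
qed

lemma strong_clique_Gpp_pendant:
  assumes "w \<in> Gp_V V - Gp_C V"
  shows "strong_clique (Gpp_V V) (Gpp_E V E) {(w, False), (w, True)}"
  unfolding strong_clique_def
proof (intro conjI allI impI notI)
  show "is_clique (Gpp_V V) (Gpp_E V E) {(w, False), (w, True)}"
    using assms unfolding is_clique_def Gpp_V_def by auto
next
  fix S assume S: "maximal_stable (Gpp_V V) (Gpp_E V E) S" and "{(w, False), (w, True)} \<inter> S = {}"
  moreover have "(w, True) \<in> Gpp_V V" using assms unfolding Gpp_V_def by auto
  ultimately show False using maximal_stable_dominates[OF S, of "(w, True)"] by auto
qed

lemma no_strong_clique_Gpp_through_C: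
  assumes "finite V" "\<And>x. \<not> E x x" "triangle_free V E" "card V \<ge> 5" "min_degree_ge V E 3"
    and "three_colorable V E" "c \<in> Gp_C V" "(c, False) \<in> K"
  shows "\<not> strong_clique (Gpp_V V) (Gpp_E V E) K"
proof
  assume strong: "strong_clique (Gpp_V V) (Gpp_E V E) K"
  let ?K' = "{w. (w, False) \<in> K}"
  have K: "K \<subseteq> Gpp_V V" "\<forall>x\<in>K. \<forall>y\<in>K. x \<noteq> y \<longrightarrow> Gpp_E V E x y"
    using strong unfolding strong_clique_def is_clique_def by auto
  have "K \<subseteq> ?K' \<times> {False}"
  proof
    fix x assume x: "x \<in> K"
    obtain w b where xw: "x = (w, b)" by fastforce
    have "\<not> b"
    proof
      assume b
      then have "(c, False) \<noteq> x" using xw by simp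
      then have "Gpp_E V E (c, False) x" using K(2) assms(8) x by blast
      then show False using assms(7) xw \<open>b\<close> by simp
    qed
    then show "x \<in> ?K' \<times> {False}" using x xw by simp
  qed
  moreover have "is_clique (Gp_V V) (Gp_E E) ?K'"
    unfolding is_clique_def
  proof (intro conjI ballI impI)
    show "?K' \<subseteq> Gp_V V" using K(1) unfolding Gpp_V_def by auto
    fix x y assume "x \<in> ?K'" "y \<in> ?K'" "x \<noteq> y"
    then show "Gp_E E x y" using K(2)[rule_format, of "(x, False)" "(y, False)"] by simp
  qed
  then obtain T where T: "is_stable (Gp_V V) (Gp_E E) T" "\<forall>k\<in>?K'. \<exists>t\<in>T. Gp_E E k t"
    using Gp_clique_dominated[OF assms(1-6)] by blast
  ultimately have "\<forall>k\<in>K. \<exists>t\<in>T \<times> {False}. Gpp_E V E k t" by fastforce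
  then have "\<not> strong_clique (Gpp_V V) (Gpp_E V E) K"
    by (rule not_strong_clique_if_dominated[OF finite_Gpp_V[OF assms(1)] Gpp_E_irrefl[OF assms(2)]
          is_stable_Gpp_False[OF T(1)]])
  then show False using strong by contradiction
qed

lemma partition_into_strong_cliques_Gpp:
  assumes "V \<noteq> {}" "\<not> three_colorable V E"
  shows "partition_into_strong_cliques (Gpp_V V) (Gpp_E V E)"
proof -
  let ?P = "insert (Gp_C V \<times> {False}) ((\<lambda>w. {(w, False), (w, True)}) ` (Gp_V V - Gp_C V))"
  have "\<Union>?P = Gpp_V V"
  proof -
    have "\<Union>?P = Gp_C V \<times> {False} \<union> (Gp_V V - Gp_C V) \<times> {False} \<union> (Gp_V V - Gp_C V) \<times> {True}"
      by blast
    also have "\<dots> = Gpp_V V" using Gp_C_subset_Gp_V[of V] unfolding Gpp_V_def by blast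
    finally show ?thesis .
  qed
  moreover have "\<forall>K\<in>?P. K \<noteq> {} \<and> strong_clique (Gpp_V V) (Gpp_E V E) K"
  proof
    fix K assume "K \<in> ?P"
    then consider "K = Gp_C V \<times> {False}"
      | w where "w \<in> Gp_V V - Gp_C V" "K = {(w, False), (w, True)}" by blast
    then show "K \<noteq> {} \<and> strong_clique (Gpp_V V) (Gpp_E V E) K"
    proof cases
      case 1
      then show ?thesis using strong_clique_Gpp_C[OF assms(2)] assms(1) by (simp add: Gp_C_def)
    next
      case 2
      then show ?thesis using strong_clique_Gpp_pendant by blast
    qed
  qed
  moreover have "\<forall>K1\<in>?P. \<forall>K2\<in>?P. K1 \<noteq> K2 \<longrightarrow> K1 \<inter> K2 = {}" by auto
  ultimately show ?thesis unfolding partition_into_strong_cliques_def by (intro exI[of _ ?P] conjI)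
qed

theorem mainTheorem7:
  fixes V :: "'a set" and E :: "'a \<Rightarrow> 'a \<Rightarrow> bool"
  assumes fin: "finite V"
    and sym: "\<And>u v. E u v \<Longrightarrow> E v u"
    and irrefl: "\<And>v. \<not> E v v"
    and tf: "triangle_free V E"
    and five: "card V \<ge> 5"
    and deg: "min_degree_ge V E 3"
  shows "diamond_free (Gp_V V) (Gp_E E) \<and> diamond_free (Gpp_V V) (Gpp_E V E) \<and>
    ((\<not> three_colorable V E) \<longleftrightarrow> strong_clique (Gp_V V) (Gp_E E) (Gp_C V)) \<and>
    ((\<not> three_colorable V E) \<longleftrightarrow> (\<exists>K. strong_clique (Gp_V V) (Gp_E E) K)) \<and>
    ((\<not> three_colorable V E) \<longleftrightarrow> strong_clique (Gpp_V V) (Gpp_E V E) (Gp_C V \<times> {False})) \<and>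
    ((\<not> three_colorable V E) \<longleftrightarrow>
       (\<forall>x\<in>Gpp_V V. \<exists>K. strong_clique (Gpp_V V) (Gpp_E V E) K \<and> x \<in> K)) \<and>
    ((\<not> three_colorable V E) \<longleftrightarrow>
       (strong_clique (Gpp_V V) (Gpp_E V E) (Gp_C V \<times> {False}) \<and>
        (\<forall>w\<in>Gp_V V - Gp_C V. strong_clique (Gpp_V V) (Gpp_E V E) {(w, False), (w, True)}))) \<and>
    ((\<not> three_colorable V E) \<longleftrightarrow> partition_into_strong_cliques (Gpp_V V) (Gpp_E V E))"
proof -
  obtain v where v: "v \<in> V" using five by fastforce
  then have C: "(v, 0) \<in> Gp_C V" and CV: "((v, 0), False) \<in> Gpp_V V"
    by (simp_all add: Gp_C_def Gpp_V_def Gp_V_def)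
  note no_strong_Gp = no_strong_clique_Gp[OF fin irrefl tf five deg]
  note no_strong_Gpp = no_strong_clique_Gpp_through_C[OF fin irrefl tf five deg _ C]
  have covered: "\<not> three_colorable V E"
    if cover: "\<forall>x\<in>Gpp_V V. \<exists>K. strong_clique (Gpp_V V) (Gpp_E V E) K \<and> x \<in> K"
    using cover CV no_strong_Gpp by blast
  have partition: "\<not> three_colorable V E \<longleftrightarrow> partition_into_strong_cliques (Gpp_V V) (Gpp_E V E)"
  proof
    show "partition_into_strong_cliques (Gpp_V V) (Gpp_E V E)" if "\<not> three_colorable V E"
      using partition_into_strong_cliques_Gpp[OF _ that] v by blast
    show "\<not> three_colorable V E" if "partition_into_strong_cliques (Gpp_V V) (Gpp_E V E)"
      using covered partition_into_strong_cliques_covers[OF that] by metis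
  qed
  have every_vertex: "\<not> three_colorable V E \<longleftrightarrow>
      (\<forall>x\<in>Gpp_V V. \<exists>K. strong_clique (Gpp_V V) (Gpp_E V E) K \<and> x \<in> K)"
    using partition partition_into_strong_cliques_covers covered by metis
  have Gp_C: "\<not> three_colorable V E \<longleftrightarrow> strong_clique (Gp_V V) (Gp_E E) (Gp_C V)"
    and Gp_some: "\<not> three_colorable V E \<longleftrightarrow> (\<exists>K. strong_clique (Gp_V V) (Gp_E E) K)"
    using strong_clique_Gp_C no_strong_Gp by blast+
  have Gpp_C: "\<not> three_colorable V E \<longleftrightarrow> strong_clique (Gpp_V V) (Gpp_E V E) (Gp_C V \<times> {False})"
    using strong_clique_Gpp_C no_strong_Gpp[of "Gp_C V \<times> {False}"] C by blast
  moreover have "\<forall>w\<in>Gp_V V - Gp_C V. strong_clique (Gpp_V V) (Gpp_E V E) {(w, False), (w, True)}"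
    using strong_clique_Gpp_pendant by blast
  ultimately show ?thesis
    using diamond_free_Gp[OF tf] diamond_free_Gpp[OF tf] Gp_C Gp_some every_vertex partition by blast
qed

end
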